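(* Let $N\ge3$, $p\in(1,\frac N{N-2})$, $\Omega\subset\mathbb{R}^N$ an open bounded domain, $\mu_n\to+\infty$, $\varepsilon_n=\mu_n^{-1/2}$, and let $v_n\ge0$ solve $-\Delta v_n=\mu_n[v_n-1]_+^p$ in $\Omega$ with $$\mu_n^{N/2}\int_\Omega[v_n-1]_+^p\le C_0,\qquad\mu_n^{N/2}\int_\Omega v_n^t\le C_t$$ for some $t\ge1$, $C_0,C_t>0$. Assume that $[v_n-1]_+\to0$ locally uniformly in a subdomain $\Omega'\subseteq\Omega$. Then for every open relatively compact $\Omega_0\Subset\Omega'$ there exist $n_0\in\mathbb{N}$ and $C>0$, depending on $\Omega_0$, such that for all $n>n_0$, $[v_n-1]_+=0$ in $\Omega_0$ and $\|v_n\|_{L^\infty(\Omega_0)}\le C\varepsilon_n^{N/t}$.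
   Context: $[s]_+=\max\{s,0\}$; a subdomain is an open connected subset. *)

theory Defs
  imports "HOL-Analysis.Analysis"
begin

definition pos_part :: "real \<Rightarrow> real" where
  "pos_part s = max s 0"

text \<open>Dv x is the (Frechet) derivative of v at x; D2v x i is the derivative at x of the
  i-th partial derivative y \<mapsto> Dv y i; the Laplacian is the trace
  \<Sum>_{i \<in> Basis} D2v x i i.\<close>
definition solves_neg_laplace ::
  "('a::euclidean_space \<Rightarrow> real) \<Rightarrow> ('a \<Rightarrow> real) \<Rightarrow> 'a set \<Rightarrow> bool" where
  "solves_neg_laplace v g U \<longleftrightarrow>
     (\<exists>Dv D2v.
        (\<forall>x\<in>U. (v has_derivative Dv x) (at x)) \<and>
        (\<forall>x\<in>U. \<forall>i\<in>Basis. ((\<lambda>y. Dv y i) has_derivative D2v x i) (at x)) \<and>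
        (\<forall>i\<in>Basis. \<forall>j\<in>Basis. continuous_on U (\<lambda>x. D2v x i j)) \<and>
        (\<forall>x\<in>U. - (\<Sum>i\<in>Basis. D2v x i i) = g x))"

end

theory Submission
  imports Defs
begin

(* The proof rests on a weighted mean value inequality.  Let psi z = [1 - |z|^2]_+ and
   Phi = psi^2 / 4, so that grad Phi z = - psi z * z.  If -Laplace w <= a on the ball B(x0, R),
   then r |-> int w(x0 + r z) psi(z) dz + a r^2/2 int Phi is nondecreasing on [0, R]: integrating
   by parts against Phi turns the derivative of the first term into r int Laplace w(x0 + r z) Phi(z) dz.
   Combined with w <= l + l^(1-t) w^t this bounds w(x0) by l plus terms of order
   ||w||_t^t / R^N and a R^2.  At the scale R = L eps_n, where mu_n R^2 = L^2, uniform smallness of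
   [v_n - 1]_+ makes the bound at most 3/4 on a neighbourhood of the closure of Omega_0 for large n,
   so the nonlinearity vanishes there; the same inequality with a = 0, a fixed radius and
   l = eps_n^(N/t) then gives v_n <= C eps_n^(N/t). *)

section \<open>Integrals over compact sets\<close>

lemma integrable_continuous_compact:
  fixes f :: "'a::euclidean_space \<Rightarrow> real"
  assumes "compact S" "continuous_on S f"
  shows "f integrable_on S"
proof -
  have "(\<lambda>x. indicator S x *\<^sub>R f x) integrable_on UNIV"
    by (rule integrable_on_lborel, rule borel_integrable_compact[OF assms])
  moreover have "(\<lambda>x. indicator S x *\<^sub>R f x) = (\<lambda>x. if x \<in> S then f x else 0)"
    by (auto simp: indicator_def)
  ultimately show ?thesis
    by (simp add: integrable_restrict_UNIV)
qed

lemma integral_eq_on_support: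
  fixes f :: "'a::euclidean_space \<Rightarrow> real"
  assumes "T \<subseteq> S" "\<And>z. z \<notin> T \<Longrightarrow> f z = 0"
  shows "integral S f = integral T f"
proof -
  have "integral S f = integral S (\<lambda>z. if z \<in> T then f z else 0)"
    using assms(2) by (intro integral_cong) auto
  also have "\<dots> = integral T f"
    using integral_restrict_Int[of S T f] assms(1) by (simp add: Int_absorb2)
  finally show ?thesis .
qed

lemma has_real_derivative_on_line:
  fixes G :: "'a::real_normed_vector \<Rightarrow> real"
  assumes "(G has_derivative G') (at (z + s *\<^sub>R e))"
  shows "((\<lambda>s. G (z + s *\<^sub>R e)) has_real_derivative G' e) (at s)"
proof -
  have "((\<lambda>s. z + s *\<^sub>R e) has_derivative (\<lambda>h. h *\<^sub>R e)) (at s)"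
    by (auto intro!: derivative_eq_intros)
  from has_derivative_compose[OF this assms]
  have "((\<lambda>s. G (z + s *\<^sub>R e)) has_derivative (\<lambda>h. G' (h *\<^sub>R e))) (at s)"
    by (simp add: o_def)
  moreover have "(\<lambda>h. G' (h *\<^sub>R e)) = (\<lambda>h. G' e * h)"
    using linear_scale[OF has_derivative_linear[OF assms]] by (auto simp: fun_eq_iff)
  ultimately show ?thesis
    by (simp add: has_field_derivative_def)
qed

lemma has_derivative_zero_outside:
  assumes "closed K" "\<And>z. z \<notin> K \<Longrightarrow> G z = 0" "z \<notin> K"
  shows "(G has_derivative (\<lambda>_. 0)) (at z)"
  by (rule has_derivative_transform_within_open[OF has_derivative_const, of "- K"]) (use assms in auto)

lemma abs_difference_quotient_le:
  fixes G :: "'a::real_normed_vector \<Rightarrow> real"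
  assumes "\<And>y. (G has_derivative G' y) (at y)" "\<And>y. \<bar>G' y e\<bar> \<le> M" "h > 0"
  shows "\<bar>(G (z + h *\<^sub>R e) - G z) / h\<bar> \<le> M"
proof -
  obtain \<xi> where "G (z + h *\<^sub>R e) - G (z + 0 *\<^sub>R e) = (h - 0) * G' (z + \<xi> *\<^sub>R e) e"
    using MVT2[of 0 h "\<lambda>s. G (z + s *\<^sub>R e)" "\<lambda>s. G' (z + s *\<^sub>R e) e"] assms(1,3)
      has_real_derivative_on_line by blast
  then show ?thesis
    using assms(2,3) by simp
qed

lemma bounded_compact_support:
  fixes f :: "'a::euclidean_space \<Rightarrow> real"
  assumes "compact K" "continuous_on K f" "\<And>z. z \<notin> K \<Longrightarrow> f z = 0"
  obtains M where "\<And>z. \<bar>f z\<bar> \<le> M"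
proof -
  have "bounded (f ` K \<union> {0})"
    using compact_imp_bounded[OF compact_continuous_image[OF assms(2,1)]] by simp
  moreover have "range f \<subseteq> f ` K \<union> {0}"
    using assms(3) by auto
  ultimately have "bounded (range f)"
    by (rule bounded_subset)
  then show ?thesis
    using that unfolding bounded_iff by auto
qed

lemma translates_compact_support_in_box:
  fixes G :: "'a::euclidean_space \<Rightarrow> real"
  assumes "compact K" "\<And>z. z \<notin> K \<Longrightarrow> G z = 0"
  obtains a where "\<And>z s. z \<notin> cbox (- a) a \<Longrightarrow> s \<in> {0..1} \<Longrightarrow> G (z + s *\<^sub>R e) = 0"
proof -
  have "compact ((\<lambda>(z, s). z - s *\<^sub>R e) ` (K \<times> {0..1::real}))"
    by (intro compact_continuous_image compact_Times assms(1) compact_Icc)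
      (auto intro!: continuous_intros simp: split_beta)
  then obtain a where a: "(\<lambda>(z, s). z - s *\<^sub>R e) ` (K \<times> {0..1}) \<subseteq> cbox (- a) a"
    using bounded_subset_cbox_symmetric compact_imp_bounded by metis
  have "G (z + s *\<^sub>R e) = 0" if "z \<notin> cbox (- a) a" "s \<in> {0..1}" for z s
    using a that by (intro assms(2)) force
  then show ?thesis
    by (rule that)
qed

lemma has_integral_shift_compact_support:
  fixes G :: "'a::euclidean_space \<Rightarrow> real"
  assumes "continuous_on UNIV G" "\<And>z. z \<notin> cbox a b \<Longrightarrow> G z = 0"
  shows "((\<lambda>z. G (z + c)) has_integral integral (cbox a b) G) UNIV"
proof -
  have "((\<lambda>z. G (z + c)) has_integral integral (cbox a b) G) (cbox (a - c) (b - c))"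
    by (intro has_integral_shift_cbox integrable_integral integrable_continuous
        continuous_on_subset[OF assms(1)]) auto
  then show ?thesis
    by (rule has_integral_on_superset) (auto intro!: assms(2) simp: mem_box algebra_simps)
qed

lemma has_integral_derivative_compact_support:
  fixes G :: "'a::euclidean_space \<Rightarrow> real"
  assumes K: "compact K" and G0: "\<And>z. z \<notin> K \<Longrightarrow> G z = 0"
    and G': "\<And>z. (G has_derivative G' z) (at z)"
    and cont: "continuous_on UNIV (\<lambda>z. G' z e)"
  shows "((\<lambda>z. G' z e) has_integral 0) UNIV"
proof -
  define D where "D z = G' z e" for z
  have D0: "D z = 0" if "z \<notin> K" for z
    using has_derivative_unique[OF G' has_derivative_zero_outside[OF compact_imp_closed[OF K] G0 that]]
    by (simp add: D_def)
  have "continuous_on K D"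
    using cont unfolding D_def by (rule continuous_on_subset) simp
  then obtain M where M: "\<And>z. \<bar>D z\<bar> \<le> M"
    by (rule bounded_compact_support[OF K _ D0]) auto
  obtain a where off_box: "\<And>z s. z \<notin> cbox (- a) a \<Longrightarrow> s \<in> {0..1} \<Longrightarrow> G (z + s *\<^sub>R e) = 0"
    by (rule translates_compact_support_in_box[OF K G0]) auto
  define B where "B = cbox (- a) a"
  note off_B = off_box[folded B_def]
  have G_cont: "continuous_on UNIV G"
    using G' by (meson continuous_at_imp_continuous_on has_derivative_continuous)
  define h where "h k = 1 / real (Suc k)" for k
  have h: "h k > 0" "h k \<le> 1" for k
    by (auto simp: h_def)
  define Q where "Q k z = (G (z + h k *\<^sub>R e) - G z) / h k" for k z
  have "((\<lambda>z. G (z + c)) has_integral integral B G) UNIV" for c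
    unfolding B_def by (rule has_integral_shift_compact_support[OF G_cont]) (use off_B[of _ 0] B_def in auto)
  from has_integral_diff[OF this this[of 0]]
  have Q_int: "(Q k has_integral 0) UNIV" for k
    using has_integral_divide[of _ 0 UNIV "h k"] by (auto simp: Q_def[abs_def])
  have Q_bound: "norm (Q k z) \<le> (if z \<in> B then M else 0)" for k z
  proof -
    have "\<bar>Q k z\<bar> \<le> M"
      unfolding Q_def by (rule abs_difference_quotient_le[OF G' M[unfolded D_def] h(1)])
    then show ?thesis
      using off_B[of z "h k"] off_B[of z 0] h[of k] by (auto simp: Q_def)
  qed
  have Q_lim: "(\<lambda>k. Q k z) \<longlonglongrightarrow> D z" for z
  proof -
    have "((\<lambda>s. (G (z + s *\<^sub>R e) - G z) / s) \<longlongrightarrow> D z) (at 0)"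
      using has_real_derivative_on_line[OF G'[of "z + 0 *\<^sub>R e"]]
      by (simp add: has_field_derivative_iff D_def)
    moreover have "filterlim h (at 0) sequentially"
      unfolding h_def by (intro filterlim_atI LIMSEQ_Suc[OF lim_1_over_n]) auto
    ultimately show ?thesis
      unfolding Q_def by (rule filterlim_compose)
  qed
  have "(\<lambda>z. if z \<in> B then M else 0) integrable_on UNIV"
    unfolding integrable_restrict_UNIV B_def by (rule integrable_const)
  from dominated_convergence[OF has_integral_integrable[OF Q_int] this Q_bound Q_lim]
  have "D integrable_on UNIV" "(\<lambda>k. integral UNIV (Q k)) \<longlonglongrightarrow> integral UNIV D"
    by simp_all
  moreover have "integral UNIV (Q k) = 0" for k
    using Q_int by (rule integral_unique)
  ultimately show ?thesis
    unfolding D_def using LIMSEQ_unique[OF _ tendsto_const] has_integral_integrable_integral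
    by fastforce
qed

lemma has_integral_derivative_compact_support_open:
  fixes G :: "'a::euclidean_space \<Rightarrow> real"
  assumes V: "open V" and K: "compact K" "K \<subseteq> V" and G0: "\<And>z. z \<notin> K \<Longrightarrow> G z = 0"
    and G': "\<And>z. z \<in> V \<Longrightarrow> (G has_derivative G' z) (at z)"
    and cont: "continuous_on V (\<lambda>z. G' z e)"
  shows "((\<lambda>z. G' z e) has_integral 0) K"
proof -
  define G'' where "G'' z = (if z \<in> V then G' z else (\<lambda>_. 0))" for z
  have open_compl: "open (- K)"
    using K compact_imp_closed by blast
  have vanish: "(G has_derivative (\<lambda>_. 0)) (at z)" if "z \<notin> K" for z
    using compact_imp_closed[OF K(1)] G0 that by (rule has_derivative_zero_outside)
  have G'': "(G has_derivative G'' z) (at z)" for z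
    using G' vanish K by (cases "z \<in> V") (auto simp: G''_def)
  have G''_0: "G'' z = (\<lambda>_. 0)" if "z \<notin> K" for z
    using has_derivative_unique[OF G'' vanish[OF that]] .
  have "continuous_on (V \<union> - K) (\<lambda>z. G'' z e)"
  proof (rule continuous_on_open_Un[OF V open_compl])
    show "continuous_on V (\<lambda>z. G'' z e)"
      using cont by (rule continuous_on_eq) (simp add: G''_def)
    show "continuous_on (- K) (\<lambda>z. G'' z e)"
      by (rule continuous_on_eq[OF continuous_on_const]) (simp add: G''_0)
  qed
  moreover have "V \<union> - K = UNIV"
    using K by auto
  ultimately have "((\<lambda>z. G'' z e) has_integral 0) UNIV"
    using has_integral_derivative_compact_support[OF K(1) G0 G''] by simp
  moreover have "G'' z e = (if z \<in> K then G' z e else 0)" for z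
    using G''_0[of z] K by (auto simp: G''_def)
  ultimately show ?thesis
    by (simp add: has_integral_restrict_UNIV)
qed

lemma linear_real_expansion:
  fixes f :: "'a::euclidean_space \<Rightarrow> real"
  assumes "linear f"
  shows "f x = (\<Sum>i\<in>Basis. (x \<bullet> i) * f i)"
  using Linear_Algebra.linear_componentwise[OF assms, of x 1] by simp

lemma has_integral_rescale_cball:
  fixes f :: "'a::euclidean_space \<Rightarrow> real"
  assumes f: "(f has_integral I) (cball x0 R)" and R: "R > 0"
  shows "((\<lambda>z. f (x0 + R *\<^sub>R z)) has_integral I / R ^ DIM('a)) (cball 0 1)"
proof -
  obtain c where c: "cball x0 R \<subseteq> cbox (- c) c"
    using bounded_subset_cbox_symmetric[OF bounded_cball] by blast
  define f0 where "f0 y = (if y \<in> cball x0 R then f y else 0)" for y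
  have "(f0 has_integral I) (cbox (- c) c)"
    unfolding f0_def by (rule has_integral_restrict[OF c, THEN iffD2, OF f])
  from has_integral_affinity'[OF this R, of x0]
  have scaled: "((\<lambda>z. f0 (R *\<^sub>R z + x0)) has_integral I / R ^ DIM('a)) (cbox ((- c - x0) /\<^sub>R R) ((c - x0) /\<^sub>R R))"
    by (simp add: divide_inverse_commute)
  have f0_scaled: "f0 (R *\<^sub>R z + x0) = (if z \<in> cball 0 1 then f (x0 + R *\<^sub>R z) else 0)" for z
    using R by (simp add: f0_def dist_norm mem_cball_0 add.commute)
  have sub: "cball 0 1 \<subseteq> cbox ((- c - x0) /\<^sub>R R) ((c - x0) /\<^sub>R R)"
  proof
    fix z :: 'a assume "z \<in> cball 0 1"
    then have "x0 + R *\<^sub>R z \<in> cbox (- c) c"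
      using c R by (auto simp: dist_norm mem_cball_0 mult_left_le intro!: subsetD[OF c])
    then show "z \<in> cbox ((- c - x0) /\<^sub>R R) ((c - x0) /\<^sub>R R)"
      using R by (auto simp: mem_box inner_diff_left inner_add_left field_simps)
  qed
  show ?thesis
    using scaled unfolding f0_scaled by (rule has_integral_restrict[OF sub, THEN iffD1])
qed

lemma integral_rescale_cball_le:
  fixes f :: "'a::euclidean_space \<Rightarrow> real"
  assumes R: "R > 0" and sub: "cball x0 R \<subseteq> U" and f_cont: "continuous_on (cball x0 R) f"
    and f_nonneg: "\<And>y. y \<in> U \<Longrightarrow> f y \<ge> 0"
    and Y: "(\<integral>\<^sup>+x\<in>U. ennreal (f x) \<partial>lebesgue) \<le> ennreal Y" "Y \<ge> 0"
  shows "integral (cball 0 1) (\<lambda>z. f (x0 + R *\<^sub>R z)) \<le> Y / R ^ DIM('a)"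
proof -
  define I where "I = integral (cball x0 R) f"
  have f_int: "(f has_integral I) (cball x0 R)"
    unfolding I_def by (intro integrable_integral integrable_continuous_compact f_cont compact_cball)
  have "\<And>y. y \<in> cball x0 R \<Longrightarrow> f y \<ge> 0"
    using f_nonneg sub by blast
  from nn_integral_has_integral_lebesgue'[OF this f_int]
  have "ennreal I = (\<integral>\<^sup>+x. ennreal (f x) * indicator (cball x0 R) x \<partial>lborel)"
    by simp
  also have "\<dots> \<le> (\<integral>\<^sup>+x. ennreal (f x) * indicator U x \<partial>lborel)"
    using sub by (intro nn_integral_mono) (auto simp: indicator_def)
  also have "\<dots> = (\<integral>\<^sup>+x\<in>U. ennreal (f x) \<partial>lebesgue)"
    by (simp add: nn_integral_completion)
  also have "\<dots> \<le> ennreal Y"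
    by (rule Y(1))
  finally have "I \<le> Y"
    using Y(2) by (simp add: ennreal_le_iff)
  then show ?thesis
    using integral_unique[OF has_integral_rescale_cball[OF f_int R]] R
    by (simp add: divide_right_mono)
qed

section \<open>A weighted mean value inequality\<close>

lemma has_real_derivative_max0_power2:
  "((\<lambda>s::real. (max 0 s)\<^sup>2) has_real_derivative 2 * max 0 s) (at s)"
proof (cases "s = 0")
  case True
  have "((\<lambda>y. ((max 0 y)\<^sup>2 - (max 0 0)\<^sup>2) / (y - 0)) \<longlongrightarrow> 0) (at (0::real))"
  proof (rule Lim_null_comparison)
    show "\<forall>\<^sub>F y in at (0::real). norm (((max 0 y)\<^sup>2 - (max 0 0)\<^sup>2) / (y - 0)) \<le> \<bar>y\<bar>"
      by (auto simp: max_def power2_eq_square abs_mult divide_simps)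
    show "((\<lambda>y::real. \<bar>y\<bar>) \<longlongrightarrow> 0) (at 0)"
      using tendsto_rabs[OF tendsto_ident_at[of 0 UNIV]] by simp
  qed
  then show ?thesis using True by (simp add: has_field_derivative_iff)
next
  case False
  then consider "s > 0" | "s < 0" by linarith
  then show ?thesis
  proof cases
    case 1
    have "((\<lambda>s::real. s\<^sup>2) has_real_derivative 2 * max 0 s) (at s)"
      using 1 by (auto intro!: derivative_eq_intros)
    then show ?thesis
      by (rule has_field_derivative_transform_within_open[where S="{0<..}"]) (use 1 in auto)
  next
    case 2
    have "((\<lambda>s::real. 0) has_real_derivative 2 * max 0 s) (at s)"
      using 2 by simp
    then show ?thesis
      by (rule has_field_derivative_transform_within_open[where S="{..<0}"]) (use 2 in auto)
  qed
qed

definition bump :: "'a::euclidean_space \<Rightarrow> real" where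
  "bump z = max 0 (1 - z \<bullet> z)"

definition bump_potential :: "'a::euclidean_space \<Rightarrow> real" where
  "bump_potential z = (bump z)\<^sup>2 / 4"

lemma bump_nonneg: "bump z \<ge> 0"
  by (simp add: bump_def)

lemma bump_le_1: "bump z \<le> 1"
  by (simp add: bump_def)

lemma bump_potential_nonneg: "bump_potential z \<ge> 0"
  by (simp add: bump_potential_def)

lemma bump_eq_0: "z \<notin> cball 0 1 \<Longrightarrow> bump z = 0"
  by (simp add: bump_def dot_square_norm power2_eq_square mem_cball_0 not_le less_1_mult)

lemma bump_potential_eq_0: "z \<notin> cball 0 1 \<Longrightarrow> bump_potential z = 0"
  by (simp add: bump_potential_def bump_eq_0)

lemma continuous_on_bump: "continuous_on S bump"
  unfolding bump_def[abs_def] by (intro continuous_intros)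

lemma continuous_on_bump_potential: "continuous_on S bump_potential"
  unfolding bump_potential_def[abs_def] by (intro continuous_intros continuous_on_bump) auto

lemma has_derivative_bump_potential:
  "(bump_potential has_derivative (\<lambda>h. - bump z * (z \<bullet> h))) (at z)"
proof -
  have inner: "((\<lambda>z. 1 - z \<bullet> z) has_derivative (\<lambda>h. - (2 * (z \<bullet> h)))) (at z)"
    by (auto intro!: derivative_eq_intros simp: inner_commute)
  have outer: "((\<lambda>s. (max 0 s)\<^sup>2 / 4) has_derivative (\<lambda>h. h * (max 0 (1 - z \<bullet> z) / 2)))
      (at (1 - z \<bullet> z))"
    using DERIV_cdivide[OF has_real_derivative_max0_power2[of "1 - z \<bullet> z"], of 4]
    unfolding has_field_derivative_def by (rule has_derivative_eq_rhs) (auto simp: fun_eq_iff)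
  show ?thesis
    using has_derivative_compose[OF inner outer]
    unfolding bump_potential_def bump_def o_def by (auto simp: algebra_simps)
qed

lemma integral_bump_pos: "integral (cball (0::'a::euclidean_space) 1) bump > 0"
proof -
  define B :: "'a set" where "B = cball 0 (1/2)"
  have ge: "bump z \<ge> 3/4" if "z \<in> B" for z
  proof -
    have "norm z * norm z \<le> (1/2) * (1/2)"
      using that by (intro mult_mono) (auto simp: B_def mem_cball_0)
    then show ?thesis by (simp add: bump_def dot_square_norm power2_eq_square)
  qed
  have "((\<lambda>_. 1) has_integral measure lborel B) B"
    unfolding B_def by (rule has_integral_measure_lborel) (use emeasure_lborel_cball_finite in auto)
  then have "((\<lambda>_. 3/4) has_integral 3/4 * measure lborel B) B"
    using has_integral_mult_right[of "\<lambda>_. 1" _ B "3/4::real"] by simp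
  moreover have "bump integrable_on B"
    unfolding B_def by (intro integrable_continuous_compact continuous_on_bump) auto
  ultimately have "3/4 * measure lborel B \<le> integral B bump"
    using ge by (intro has_integral_le[OF _ integrable_integral])
  also have "\<dots> \<le> integral (cball (0::'a) 1) bump"
    by (intro integral_subset_le integrable_continuous_compact continuous_on_bump)
      (auto simp: B_def bump_nonneg)
  finally show ?thesis
    using content_cball_pos[of "1/2" "0::'a"] unfolding B_def by linarith
qed

lemma has_integral_partial_derivative_bump_potential:
  fixes f :: "'a::euclidean_space \<Rightarrow> real"
  assumes U: "open U" "cball x0 r \<subseteq> U" and r: "r > 0" and i: "i \<in> Basis"
    and f': "\<And>x. x \<in> U \<Longrightarrow> (f has_derivative f' x) (at x)"
    and f'_cont: "continuous_on U (\<lambda>x. f' x i)"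
  shows "((\<lambda>z. r * f' (x0 + r *\<^sub>R z) i * bump_potential z - f (x0 + r *\<^sub>R z) * bump z * (z \<bullet> i))
    has_integral 0) (cball 0 1)"
proof -
  define V where "V = (\<lambda>z. x0 + r *\<^sub>R z) -` U"
  have V: "open V"
    unfolding V_def by (intro open_vimage U(1) continuous_intros)
  have "x0 + r *\<^sub>R z \<in> cball x0 r" if "z \<in> cball 0 1" for z
    using that r by (simp add: dist_norm mem_cball_0 mult_left_le)
  then have KV: "cball 0 1 \<subseteq> V"
    using U(2) by (force simp: V_def)
  define G where "G z = f (x0 + r *\<^sub>R z) * bump_potential z" for z
  define G' where "G' z h = f' (x0 + r *\<^sub>R z) (r *\<^sub>R h) * bump_potential z
      - f (x0 + r *\<^sub>R z) * bump z * (z \<bullet> h)" for z h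
  have G': "(G has_derivative G' z) (at z)" if "z \<in> V" for z
  proof -
    have "((\<lambda>z. x0 + r *\<^sub>R z) has_derivative (\<lambda>h. r *\<^sub>R h)) (at z)"
      by (auto intro!: derivative_eq_intros)
    from has_derivative_compose[OF this f'] that
    have "((\<lambda>z. f (x0 + r *\<^sub>R z)) has_derivative (\<lambda>h. f' (x0 + r *\<^sub>R z) (r *\<^sub>R h))) (at z)"
      by (simp add: V_def o_def)
    from has_derivative_mult[OF this has_derivative_bump_potential[of z]] show ?thesis
      unfolding G_def G'_def by (rule has_derivative_eq_rhs) (auto simp: fun_eq_iff algebra_simps)
  qed
  have G'_eq: "G' z i = r * f' (x0 + r *\<^sub>R z) i * bump_potential z - f (x0 + r *\<^sub>R z) * bump z * (z \<bullet> i)"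
    if "z \<in> V" for z
    using linear_scale[OF has_derivative_linear[OF f'], of "x0 + r *\<^sub>R z" r i] that
    by (simp add: G'_def V_def)
  have f_cont: "continuous_on U f"
    using f' by (meson continuous_at_imp_continuous_on has_derivative_continuous)
  have "continuous_on V (\<lambda>z. r * f' (x0 + r *\<^sub>R z) i * bump_potential z
      - f (x0 + r *\<^sub>R z) * bump z * (z \<bullet> i))"
    by (intro continuous_intros continuous_on_bump continuous_on_bump_potential
        continuous_on_compose2[OF f'_cont] continuous_on_compose2[OF f_cont]) (auto simp: V_def)
  then have "continuous_on V (\<lambda>z. G' z i)"
    using G'_eq by (simp cong: continuous_on_cong)
  from has_integral_derivative_compact_support_open[OF V compact_cball KV _ G' this]
  have "((\<lambda>z. G' z i) has_integral 0) (cball 0 1)"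
    by (simp add: G_def bump_potential_eq_0)
  then show ?thesis
    by (rule has_integral_eq[rotated]) (use G'_eq KV in blast)
qed

lemma integral_gradient_bump_eq_laplacian:
  fixes w :: "'a::euclidean_space \<Rightarrow> real"
  assumes U: "open U" "cball x0 r \<subseteq> U" and r: "r > 0"
    and Dw: "\<And>x. x \<in> U \<Longrightarrow> (w has_derivative Dw x) (at x)"
    and D2w: "\<And>x i. x \<in> U \<Longrightarrow> i \<in> Basis \<Longrightarrow> ((\<lambda>y. Dw y i) has_derivative D2w x i) (at x)"
    and D2w_cont: "\<And>i. i \<in> Basis \<Longrightarrow> continuous_on U (\<lambda>x. D2w x i i)"
  shows "integral (cball 0 1) (\<lambda>z. Dw (x0 + r *\<^sub>R z) z * bump z)
       = r * integral (cball 0 1) (\<lambda>z. (\<Sum>i\<in>Basis. D2w (x0 + r *\<^sub>R z) i i) * bump_potential z)"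
proof -
  define K :: "'a set" where "K = cball 0 1"
  define A where "A z = (\<Sum>i\<in>Basis. D2w (x0 + r *\<^sub>R z) i i) * bump_potential z" for z
  define B where "B z = Dw (x0 + r *\<^sub>R z) z * bump z" for z
  have in_U: "x0 + r *\<^sub>R z \<in> U" if "z \<in> K" for z
    using that r U(2) by (force simp: K_def dist_norm mult_left_le)
  define g where "g i z = r * D2w (x0 + r *\<^sub>R z) i i * bump_potential z
      - Dw (x0 + r *\<^sub>R z) i * bump z * (z \<bullet> i)" for i z
  have "(g i has_integral 0) K" if "i \<in> Basis" for i
    unfolding g_def K_def
    by (rule has_integral_partial_derivative_bump_potential[OF U r that]) (use D2w D2w_cont that in auto)
  then have "((\<lambda>z. \<Sum>i\<in>Basis. g i z) has_integral 0) K"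
    using has_integral_sum[of Basis g "\<lambda>_. 0" K, OF finite_Basis] by simp
  moreover have "(\<Sum>i\<in>Basis. g i z) = r * A z - B z" if "z \<in> K" for z
    using linear_real_expansion[OF has_derivative_linear[OF Dw[OF in_U[OF that]]], of z]
    by (simp add: g_def A_def B_def sum_subtractf sum_distrib_left sum_distrib_right algebra_simps)
  ultimately have zero: "((\<lambda>z. r * A z - B z) has_integral 0) K"
    by (rule has_integral_eq[rotated])
  have "A integrable_on K"
    unfolding A_def K_def using in_U
    by (intro integrable_continuous_compact continuous_intros continuous_on_bump_potential
        continuous_on_compose2[OF D2w_cont]) (auto simp: K_def)
  from has_integral_diff[OF has_integral_mult_right[OF integrable_integral[OF this], of r] zero]
  have "(B has_integral r * integral K A) K"
    by simp
  then show ?thesis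
    unfolding A_def[abs_def] B_def[abs_def] K_def by (rule integral_unique)
qed

lemma integral_gradient_bump_ge:
  fixes w :: "'a::euclidean_space \<Rightarrow> real"
  assumes U: "open U" "cball x0 r \<subseteq> U" and r: "r > 0"
    and Dw: "\<And>x. x \<in> U \<Longrightarrow> (w has_derivative Dw x) (at x)"
    and D2w: "\<And>x i. x \<in> U \<Longrightarrow> i \<in> Basis \<Longrightarrow> ((\<lambda>y. Dw y i) has_derivative D2w x i) (at x)"
    and D2w_cont: "\<And>i. i \<in> Basis \<Longrightarrow> continuous_on U (\<lambda>x. D2w x i i)"
    and lap: "\<And>x. x \<in> cball x0 r \<Longrightarrow> (\<Sum>i\<in>Basis. D2w x i i) \<ge> - a"
  shows "integral (cball 0 1) (\<lambda>z. Dw (x0 + r *\<^sub>R z) z * bump z)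
    \<ge> - a * r * integral (cball (0::'a) 1) bump_potential"
proof -
  define K :: "'a set" where "K = cball 0 1"
  define A where "A z = (\<Sum>i\<in>Basis. D2w (x0 + r *\<^sub>R z) i i) * bump_potential z" for z
  have in_ball: "x0 + r *\<^sub>R z \<in> cball x0 r" if "z \<in> K" for z
    using that r by (simp add: K_def dist_norm mult_left_le)
  have "integral K (\<lambda>z. - a * bump_potential z) \<le> integral K A"
  proof (rule integral_le)
    show "(\<lambda>z. - a * bump_potential z) integrable_on K"
      unfolding K_def
      by (intro integrable_continuous_compact continuous_intros continuous_on_bump_potential) auto
    show "A integrable_on K"
      unfolding A_def K_def using in_ball U(2)
      by (intro integrable_continuous_compact continuous_intros continuous_on_bump_potential
          continuous_on_compose2[OF D2w_cont]) (auto simp: K_def)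
    show "- a * bump_potential z \<le> A z" if "z \<in> K" for z
      unfolding A_def using lap[OF in_ball[OF that]] by (rule mult_right_mono[OF _ bump_potential_nonneg])
  qed
  then have "- a * integral K bump_potential \<le> integral K A"
    by simp
  from mult_left_mono[OF this less_imp_le[OF r]]
  show ?thesis
    using integral_gradient_bump_eq_laplacian[OF U r Dw D2w D2w_cont]
    by (simp add: A_def[abs_def] K_def mult_ac)
qed

lemma has_field_derivative_integral_bump:
  fixes f f' :: "real \<Rightarrow> 'a::euclidean_space \<Rightarrow> real"
  assumes f': "\<And>s z. s \<in> {0..R} \<Longrightarrow> z \<in> cball 0 1 \<Longrightarrow>
      ((\<lambda>s. f s z) has_field_derivative f' s z) (at s within {0..R})"
    and f_cont: "\<And>s. s \<in> {0..R} \<Longrightarrow> continuous_on (cball 0 1) (f s)"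
    and f'_cont: "continuous_on ({0..R} \<times> cball 0 1) (\<lambda>(s, z). f' s z)"
    and r: "r \<in> {0..R}"
  shows "((\<lambda>s. integral (cball 0 1) (\<lambda>z. f s z * bump z)) has_field_derivative
      integral (cball 0 1) (\<lambda>z. f' r z * bump z)) (at r within {0..R})"
proof -
  define K :: "'a set" where "K = cball 0 1"
  obtain c where KB: "K \<subseteq> cbox (- c) c"
    unfolding K_def using bounded_subset_cbox_symmetric[OF bounded_cball] by blast
  (* The Leibniz rule wants a box as domain of integration; precomposing with the nearest point
     projection onto the unit ball extends the integrands continuously to a box. *)
  define P where "P = closest_point K"
  have PK: "P z \<in> K" for z
    unfolding P_def K_def by (rule closest_point_in_set) auto
  have P_id: "z \<in> K \<Longrightarrow> P z = z" for z
    unfolding P_def by (rule closest_point_self)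
  have P_cont: "continuous_on S P" for S
    unfolding P_def K_def by (rule continuous_on_closest_point) auto
  have integral_P: "integral (cbox (- c) c) (\<lambda>z. g (P z) * bump z) = integral K (\<lambda>z. g z * bump z)"
    for g :: "'a \<Rightarrow> real"
  proof -
    have "integral (cbox (- c) c) (\<lambda>z. g (P z) * bump z) = integral K (\<lambda>z. g (P z) * bump z)"
      by (rule integral_eq_on_support[OF KB]) (simp add: K_def bump_eq_0)
    also have "\<dots> = integral K (\<lambda>z. g z * bump z)"
      by (rule integral_cong) (simp add: P_id)
    finally show ?thesis .
  qed
  have "((\<lambda>s. f s (P z) * bump z) has_field_derivative f' s (P z) * bump z) (at s within {0..R})"
    if "s \<in> {0..R}" for s z
    using f'[OF that PK[unfolded K_def]] by (rule DERIV_cmult_right)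
  moreover have "(\<lambda>z. f s (P z) * bump z) integrable_on cbox (- c) c" if "s \<in> {0..R}" for s
    by (intro integrable_continuous continuous_intros continuous_on_bump
        continuous_on_compose2[OF f_cont[OF that] P_cont]) (use PK in \<open>auto simp: K_def\<close>)
  moreover have "continuous_on ({0..R} \<times> cbox (- c) c) (\<lambda>(s, z). f' s (P z) * bump z)"
  proof -
    have "continuous_on ({0..R} \<times> cbox (- c) c) (\<lambda>x. (fst x, P (snd x)))"
      by (intro continuous_intros continuous_on_compose2[OF P_cont[of UNIV]]) auto
    from continuous_on_compose2[OF f'_cont this]
    have "continuous_on ({0..R} \<times> cbox (- c) c) (\<lambda>x. f' (fst x) (P (snd x)))"
      using PK by (force simp: K_def)
    then show ?thesis
      unfolding split_beta
      by (intro continuous_intros continuous_on_compose2[OF continuous_on_bump[of UNIV]]) auto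
  qed
  ultimately have "((\<lambda>s. integral (cbox (- c) c) (\<lambda>z. f s (P z) * bump z)) has_field_derivative
      integral (cbox (- c) c) (\<lambda>z. f' r (P z) * bump z)) (at r within {0..R})"
    by (intro leibniz_rule_field_derivative r) auto
  then show ?thesis
    unfolding integral_P by (simp add: K_def)
qed

lemma has_field_derivative_bump_average:
  fixes w :: "'a::euclidean_space \<Rightarrow> real"
  assumes U: "cball x0 R \<subseteq> U" and r: "r \<in> {0..R}"
    and Dw: "\<And>x. x \<in> U \<Longrightarrow> (w has_derivative Dw x) (at x)"
    and Dw_cont: "\<And>i. i \<in> Basis \<Longrightarrow> continuous_on U (\<lambda>x. Dw x i)"
  shows "((\<lambda>r. integral (cball 0 1) (\<lambda>z. w (x0 + r *\<^sub>R z) * bump z)) has_field_derivative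
      integral (cball 0 1) (\<lambda>z. Dw (x0 + r *\<^sub>R z) z * bump z)) (at r within {0..R})"
proof -
  have in_U: "x0 + s *\<^sub>R z \<in> U" if "s \<in> {0..R}" "z \<in> cball 0 1" for s z
  proof -
    have "norm (s *\<^sub>R z) \<le> R"
      using that mult_mono[of s R "norm z" 1] by auto
    then show ?thesis
      using U by (auto simp: dist_norm)
  qed
  have w_cont: "continuous_on U w"
    using Dw by (meson continuous_at_imp_continuous_on has_derivative_continuous)
  have Dw_sum: "Dw (x0 + s *\<^sub>R z) z = (\<Sum>i\<in>Basis. (z \<bullet> i) * Dw (x0 + s *\<^sub>R z) i)"
    if "s \<in> {0..R}" "z \<in> cball 0 1" for s z
    using that by (intro linear_real_expansion has_derivative_linear[OF Dw] in_U)
  have "continuous_on ({0..R} \<times> cball 0 1) (\<lambda>x. Dw (x0 + fst x *\<^sub>R snd x) i)" if "i \<in> Basis" for i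
    by (rule continuous_on_compose2[OF Dw_cont[OF that]]) (auto intro!: continuous_intros in_U)
  then have "continuous_on ({0..R} \<times> cball 0 1)
      (\<lambda>x. \<Sum>i\<in>Basis. (snd x \<bullet> i) * Dw (x0 + fst x *\<^sub>R snd x) i)"
    by (intro continuous_intros) auto
  then have Dw_cont': "continuous_on ({0..R} \<times> cball 0 1) (\<lambda>(s, z). Dw (x0 + s *\<^sub>R z) z)"
    unfolding split_beta by (rule continuous_on_eq) (auto simp: Dw_sum)
  show ?thesis
  proof (rule has_field_derivative_integral_bump[OF _ _ Dw_cont' r])
    fix s z assume "s \<in> {0..R}" "z \<in> cball (0::'a) 1"
    then have "((\<lambda>s. w (x0 + s *\<^sub>R z)) has_field_derivative Dw (x0 + s *\<^sub>R z) z) (at s)"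
      by (intro has_real_derivative_on_line Dw in_U)
    then show "((\<lambda>s. w (x0 + s *\<^sub>R z)) has_field_derivative Dw (x0 + s *\<^sub>R z) z) (at s within {0..R})"
      by (rule has_field_derivative_at_within)
  next
    fix s assume "s \<in> {0..R}"
    then show "continuous_on (cball 0 1) (\<lambda>z. w (x0 + s *\<^sub>R z))"
      by (intro continuous_on_compose2[OF w_cont] continuous_intros) (auto intro: in_U)
  qed
qed

lemma bump_mean_value_inequality:
  fixes w g :: "'a::euclidean_space \<Rightarrow> real"
  assumes sol: "solves_neg_laplace w g U" and U: "open U" "cball x0 R \<subseteq> U" and R: "R > 0"
    and g_le: "\<And>y. y \<in> cball x0 R \<Longrightarrow> g y \<le> a"
  shows "w x0 * integral (cball (0::'a) 1) bump
    \<le> integral (cball 0 1) (\<lambda>z. w (x0 + R *\<^sub>R z) * bump z)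
      + a * R\<^sup>2 / 2 * integral (cball (0::'a) 1) bump_potential"
proof -
  obtain Dw D2w where
    Dw: "\<And>x. x \<in> U \<Longrightarrow> (w has_derivative Dw x) (at x)" and
    D2w: "\<And>x i. x \<in> U \<Longrightarrow> i \<in> Basis \<Longrightarrow> ((\<lambda>y. Dw y i) has_derivative D2w x i) (at x)" and
    D2w_cont: "\<And>i j. i \<in> Basis \<Longrightarrow> j \<in> Basis \<Longrightarrow> continuous_on U (\<lambda>x. D2w x i j)" and
    lap: "\<And>x. x \<in> U \<Longrightarrow> - (\<Sum>i\<in>Basis. D2w x i i) = g x"
    using sol unfolding solves_neg_laplace_def by blast
  define K :: "'a set" where "K = cball 0 1"
  define M where "M = integral K bump_potential"
  define F where "F r = integral K (\<lambda>z. w (x0 + r *\<^sub>R z) * bump z)" for r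
  define F' where "F' r = integral K (\<lambda>z. Dw (x0 + r *\<^sub>R z) z * bump z)" for r
  have Dw_cont: "continuous_on U (\<lambda>y. Dw y i)" if "i \<in> Basis" for i
    using D2w[OF _ that] by (meson continuous_at_imp_continuous_on has_derivative_continuous)
  have F': "(F has_field_derivative F' r) (at r within {0..R})" if "r \<in> {0..R}" for r
    unfolding F_def[abs_def] F'_def K_def
    by (rule has_field_derivative_bump_average[OF U(2) that Dw Dw_cont])
  have F'_ge: "F' r \<ge> - a * r * M" if r: "0 < r" "r < R" for r
  proof -
    have "cball x0 r \<subseteq> cball x0 R"
      using r by auto
    then show ?thesis
      unfolding F'_def M_def K_def using U g_le lap
      by (intro integral_gradient_bump_ge[OF U(1) _ r(1) Dw D2w D2w_cont]) force+
  qed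
  define H where "H r = F r + a * M * r\<^sup>2 / 2" for r
  have H': "(H has_field_derivative F' r + a * M * r) (at r within {0..R})" if "r \<in> {0..R}" for r
    unfolding H_def[abs_def] using that by (auto intro!: derivative_eq_intros F')
  have H_cont: "continuous_on {0..R} H"
    using H' by (meson DERIV_continuous continuous_on_eq_continuous_within)
  have H'_nonneg: "\<exists>y. (H has_field_derivative y) (at r) \<and> 0 \<le> y" if "0 < r" "r < R" for r
  proof (intro exI conjI)
    show "(H has_field_derivative F' r + a * M * r) (at r)"
      using H'[of r] at_within_Icc_at[of 0 r R] that by simp
    show "0 \<le> F' r + a * M * r"
      using F'_ge[OF that] by (simp add: mult_ac)
  qed
  have "H 0 \<le> H R"
    by (rule DERIV_nonneg_imp_increasing_open[OF _ H'_nonneg H_cont]) (use R in auto)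
  moreover have "H 0 = w x0 * integral K bump"
    by (simp add: H_def F_def)
  ultimately show ?thesis
    by (simp add: H_def F_def K_def M_def mult_ac)
qed

lemma le_add_powr:
  fixes v l t :: real
  assumes v: "v \<ge> 0" and l: "l > 0" and t: "t \<ge> 1"
  shows "v \<le> l + l powr (1 - t) * v powr t"
proof (cases "v \<le> l")
  case True
  have "0 \<le> l powr (1 - t) * v powr t"
    by simp
  then show ?thesis
    using True by linarith
next
  case False
  have "l powr (1 - t) * v powr t = v * (v / l) powr (t - 1)"
    using False l by (simp add: powr_diff powr_divide powr_minus_divide field_simps flip: powr_add)
  also have "\<dots> \<ge> v"
    using False l t by (simp add: ge_one_powr_ge_zero)
  finally show ?thesis
    using l by simp
qed

lemma bump_pointwise_bound:
  fixes w g :: "'a::euclidean_space \<Rightarrow> real"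
  assumes sol: "solves_neg_laplace w g U" and U: "open U" "cball x0 R \<subseteq> U" and R: "R > 0"
    and g_le: "\<And>y. y \<in> cball x0 R \<Longrightarrow> g y \<le> a"
    and w_nonneg: "\<And>y. y \<in> U \<Longrightarrow> w y \<ge> 0"
    and l: "l > 0" and t: "t \<ge> 1"
    and Y: "(\<integral>\<^sup>+x\<in>U. ennreal (w x powr t) \<partial>lebesgue) \<le> ennreal Y" "Y \<ge> 0"
  shows "w x0 \<le> l + (l powr (1 - t) * Y / R ^ DIM('a)
      + a * R\<^sup>2 / 2 * integral (cball (0::'a) 1) bump_potential) / integral (cball (0::'a) 1) bump"
proof -
  define K :: "'a set" where "K = cball 0 1"
  define Psi where "Psi = integral K bump"
  have Psi: "Psi > 0"
    unfolding Psi_def K_def by (rule integral_bump_pos)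
  have in_U: "x0 + R *\<^sub>R z \<in> U" if "z \<in> K" for z
    using that R U(2) by (force simp: K_def dist_norm mult_left_le)
  have w_cont: "continuous_on U w"
    using sol unfolding solves_neg_laplace_def
    by (meson continuous_at_imp_continuous_on has_derivative_continuous)
  have wt_cont: "continuous_on (cball x0 R) (\<lambda>x. w x powr t)"
    using U(2) w_nonneg t
    by (intro continuous_on_powr' continuous_on_subset[OF w_cont] continuous_intros) auto
  have pointwise:
    "w (x0 + R *\<^sub>R z) * bump z \<le> l * bump z + l powr (1 - t) * w (x0 + R *\<^sub>R z) powr t"
    if "z \<in> K" for z
  proof -
    have "w (x0 + R *\<^sub>R z) * bump z \<le> (l + l powr (1 - t) * w (x0 + R *\<^sub>R z) powr t) * bump z"
      using le_add_powr[OF w_nonneg[OF in_U[OF that]] l t] by (rule mult_right_mono[OF _ bump_nonneg])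
    also have "\<dots> \<le> l * bump z + l powr (1 - t) * w (x0 + R *\<^sub>R z) powr t"
      using bump_le_1[of z] by (simp add: distrib_right mult_left_le)
    finally show ?thesis .
  qed
  have wt_int: "(\<lambda>z. w (x0 + R *\<^sub>R z) powr t) integrable_on K"
    unfolding K_def using in_U w_nonneg t
    by (intro integrable_continuous_compact continuous_on_powr' continuous_intros
        continuous_on_compose2[OF w_cont]) (auto simp: K_def)
  have bump_int: "bump integrable_on K"
    unfolding K_def by (intro integrable_continuous_compact continuous_on_bump) auto
  have "(\<lambda>z. w (x0 + R *\<^sub>R z) * bump z) integrable_on K"
    unfolding K_def using in_U
    by (intro integrable_continuous_compact continuous_intros continuous_on_bump
        continuous_on_compose2[OF w_cont]) (auto simp: K_def)
  then have "integral K (\<lambda>z. w (x0 + R *\<^sub>R z) * bump z)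
      \<le> integral K (\<lambda>z. l * bump z + l powr (1 - t) * w (x0 + R *\<^sub>R z) powr t)"
    by (intro integral_le integrable_add integrable_on_mult_right bump_int wt_int pointwise)
  also have "\<dots> = l * Psi + l powr (1 - t) * integral K (\<lambda>z. w (x0 + R *\<^sub>R z) powr t)"
    using bump_int wt_int
    by (simp add: Psi_def integral_add integrable_on_mult_right integral_mult_right)
  also have "\<dots> \<le> l * Psi + l powr (1 - t) * (Y / R ^ DIM('a))"
    unfolding K_def using integral_rescale_cball_le[OF R U(2) wt_cont _ Y] w_nonneg
    by (intro add_left_mono mult_left_mono) auto
  finally have "w x0 * Psi
      \<le> l * Psi + l powr (1 - t) * (Y / R ^ DIM('a)) + a * R\<^sup>2 / 2 * integral K bump_potential"
    using bump_mean_value_inequality[OF sol U R g_le] unfolding Psi_def K_def by linarith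
  then show ?thesis
    using Psi unfolding Psi_def K_def by (simp add: field_simps)
qed

section \<open>The rescaled solutions\<close>

lemma choose_scale_and_threshold:
  fixes Psi M C t :: real and N :: nat
  assumes Psi: "Psi > 0" and M: "M \<ge> 0" and C: "C > 0" and N: "N \<ge> 1"
  obtains L \<eta> where "L \<ge> 1" "0 < \<eta>" "\<eta> \<le> 1"
    "(1/4) powr (1 - t) * C / L ^ N + \<eta> * L\<^sup>2 / 2 * M \<le> Psi / 2"
proof -
  define L where "L = max 1 (4 powr t * C / Psi)"
  define \<eta> where "\<eta> = min 1 (Psi / (2 * L\<^sup>2 * (M + 1)))"
  have L: "L \<ge> 1"
    by (simp add: L_def)
  have \<eta>: "0 < \<eta>" "\<eta> \<le> 1"
    using Psi M L by (auto simp: \<eta>_def)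
  have "(1/4) powr (1 - t) * C / L ^ N \<le> Psi / 4"
  proof -
    have "4 powr t * C / Psi \<le> L"
      by (simp add: L_def)
    then have bound: "4 powr t * C \<le> Psi * L"
      using Psi by (simp add: pos_divide_le_eq mult.commute)
    have "L \<le> L ^ N"
      using L N power_increasing[of 1 N L] by simp
    then have "(1/4) powr (1 - t) * C / L ^ N \<le> (1/4) powr (1 - t) * C / L"
      using L C by (intro divide_left_mono) auto
    also have "\<dots> = 4 powr t * C / 4 / L"
      by (simp add: powr_divide powr_diff)
    also have "\<dots> \<le> Psi / 4"
      using L bound by (simp add: divide_le_eq)
    finally show ?thesis .
  qed
  moreover have "\<eta> * L\<^sup>2 / 2 * M \<le> Psi / 4"
  proof -
    have "\<eta> \<le> Psi / (2 * L\<^sup>2 * (M + 1))"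
      by (simp add: \<eta>_def)
    then have "\<eta> * (2 * L\<^sup>2 * (M + 1)) \<le> Psi"
      using L M by (simp add: pos_le_divide_eq)
    moreover have "\<eta> * L\<^sup>2 * M \<le> \<eta> * L\<^sup>2 * (M + 1)"
      using \<eta> by (intro mult_left_mono) auto
    ultimately show ?thesis
      by (simp add: algebra_simps)
  qed
  ultimately show ?thesis
    using that[OF L \<eta>] by linarith
qed

lemma compact_cball_thickening:
  fixes K0 :: "'a::euclidean_space set"
  assumes K0: "compact K0" "open S" "K0 \<subseteq> S"
  obtains K e where "compact K" "K \<subseteq> S" "e > 0" "\<And>x. x \<in> K0 \<Longrightarrow> cball x e \<subseteq> K"
proof -
  obtain e where e: "e > 0" "(\<Union>x\<in>K0. cball x e) \<subseteq> S"
    using compact_subset_open_imp_cball_epsilon_subset[OF K0] by blast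
  define K where "K = {x + y | x y. x \<in> K0 \<and> y \<in> cball 0 e}"
  have "compact K"
    unfolding K_def by (rule compact_sums[OF K0(1) compact_cball])
  moreover have "K \<subseteq> S"
  proof
    fix z assume "z \<in> K"
    then obtain x y where "z = x + y" "x \<in> K0" "y \<in> cball 0 e"
      unfolding K_def by blast
    then have "z \<in> cball x e"
      by (simp add: dist_norm)
    with \<open>x \<in> K0\<close> e(2) show "z \<in> S"
      by blast
  qed
  moreover have "cball x e \<subseteq> K" if "x \<in> K0" for x
  proof
    fix y assume "y \<in> cball x e"
    then show "y \<in> K"
      unfolding K_def using that by (intro CollectI exI[of _ x] exI[of _ "y - x"]) (auto simp: dist_norm)
  qed
  ultimately show ?thesis
    using that e(1) by blast
qed

lemma pos_part_nonneg: "pos_part s \<ge> 0"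
  by (simp add: pos_part_def)

locale scaled_solution_sequence =
  fixes \<Omega> :: "'a::euclidean_space set" and v :: "nat \<Rightarrow> 'a \<Rightarrow> real" and \<mu> :: "nat \<Rightarrow> real"
    and p t C :: real
  assumes open_domain: "open \<Omega>"
    and v_nonneg: "\<And>n x. x \<in> \<Omega> \<Longrightarrow> v n x \<ge> 0"
    and v_solves: "\<And>n. solves_neg_laplace (v n) (\<lambda>x. \<mu> n * pos_part (v n x - 1) powr p) \<Omega>"
    and \<mu>_at_top: "filterlim \<mu> at_top sequentially"
    and p_ge_1: "p \<ge> 1" and t_ge_1: "t \<ge> 1" and C_pos: "C > 0"
    and Lt_bound: "\<And>n. ennreal (\<mu> n powr (real DIM('a) / 2)) *
      (\<integral>\<^sup>+x\<in>\<Omega>. ennreal (v n x powr t) \<partial>lebesgue) \<le> ennreal C"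
begin

definition \<epsilon> :: "nat \<Rightarrow> real" where
  "\<epsilon> n = \<mu> n powr (-1/2)"

lemma \<epsilon>_pos: "\<mu> n > 0 \<Longrightarrow> \<epsilon> n > 0"
  by (simp add: \<epsilon>_def)

lemma \<epsilon>_power:
  assumes "\<mu> n > 0"
  shows "\<epsilon> n ^ k = 1 / \<mu> n powr (real k / 2)"
proof -
  have "\<epsilon> n ^ k = \<epsilon> n powr real k"
    using \<epsilon>_pos[OF assms] by (rule powr_realpow[symmetric])
  also have "\<dots> = \<mu> n powr (- (real k / 2))"
    unfolding \<epsilon>_def powr_powr by simp
  finally show ?thesis
    by (simp add: powr_minus_divide)
qed

lemma \<mu>_mult_\<epsilon>_square: "\<mu> n > 0 \<Longrightarrow> \<mu> n * (\<epsilon> n)\<^sup>2 = 1"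
  using \<epsilon>_power[of n 2] by simp

lemma Lt_bound_\<epsilon>:
  assumes "\<mu> n > 0"
  shows "(\<integral>\<^sup>+x\<in>\<Omega>. ennreal (v n x powr t) \<partial>lebesgue) \<le> ennreal (C * \<epsilon> n ^ DIM('a))"
proof -
  define m where "m = \<mu> n powr (real DIM('a) / 2)"
  have m: "m > 0"
    using assms by (simp add: m_def)
  have "\<epsilon> n ^ DIM('a) = 1 / m"
    unfolding m_def by (rule \<epsilon>_power[OF assms])
  moreover have "(\<integral>\<^sup>+x\<in>\<Omega>. ennreal (v n x powr t) \<partial>lebesgue) \<le> ennreal (1 / m) * ennreal C"
  proof -
    have "(\<integral>\<^sup>+x\<in>\<Omega>. ennreal (v n x powr t) \<partial>lebesgue)
        = ennreal (1 / m) * (ennreal m * (\<integral>\<^sup>+x\<in>\<Omega>. ennreal (v n x powr t) \<partial>lebesgue))"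
      using m by (simp add: mult.assoc[symmetric] flip: ennreal_mult)
    also have "\<dots> \<le> ennreal (1 / m) * ennreal C"
      using Lt_bound[of n] unfolding m_def by (rule mult_left_mono) simp
    finally show ?thesis .
  qed
  ultimately show ?thesis
    using m C_pos by (simp add: ennreal_mult[symmetric] mult.commute)
qed

lemma rescaled_bound:
  assumes \<mu>: "\<mu> n > 0" and L: "L > 0" and ball: "cball x (L * \<epsilon> n) \<subseteq> \<Omega>"
    and small: "\<And>y. y \<in> cball x (L * \<epsilon> n) \<Longrightarrow> pos_part (v n y - 1) \<le> \<eta>"
    and \<eta>: "0 \<le> \<eta>" "\<eta> \<le> 1" and l: "l > 0"
  shows "v n x \<le> l + (l powr (1 - t) * C / L ^ DIM('a)
      + \<eta> * L\<^sup>2 / 2 * integral (cball (0::'a) 1) bump_potential) / integral (cball (0::'a) 1) bump"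
proof -
  have \<epsilon>: "\<epsilon> n > 0"
    using \<epsilon>_pos[OF \<mu>] .
  have "\<mu> n * pos_part (v n y - 1) powr p \<le> \<mu> n * \<eta>" if "y \<in> cball x (L * \<epsilon> n)" for y
  proof -
    have "pos_part (v n y - 1) powr p \<le> \<eta> powr p"
      using small[OF that] p_ge_1 by (intro powr_mono2) (auto simp: pos_part_def)
    also have "\<dots> \<le> \<eta> powr 1"
      using p_ge_1 \<eta> by (intro powr_mono') auto
    finally show ?thesis
      using \<mu> \<eta> by (simp add: mult_left_mono)
  qed
  from bump_pointwise_bound[OF v_solves open_domain ball _ this v_nonneg l t_ge_1 Lt_bound_\<epsilon>[OF \<mu>]]
  have "v n x \<le> l + (l powr (1 - t) * (C * \<epsilon> n ^ DIM('a)) / (L * \<epsilon> n) ^ DIM('a)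
      + \<mu> n * \<eta> * (L * \<epsilon> n)\<^sup>2 / 2 * integral (cball (0::'a) 1) bump_potential)
      / integral (cball (0::'a) 1) bump"
    using L \<epsilon> C_pos by simp
  also have "l powr (1 - t) * (C * \<epsilon> n ^ DIM('a)) / (L * \<epsilon> n) ^ DIM('a) = l powr (1 - t) * C / L ^ DIM('a)"
    using \<epsilon> by (simp add: power_mult_distrib)
  also have "\<mu> n * \<eta> * (L * \<epsilon> n)\<^sup>2 = \<eta> * L\<^sup>2 * (\<mu> n * (\<epsilon> n)\<^sup>2)"
    by (simp add: power_mult_distrib)
  finally show ?thesis
    using \<mu>_mult_\<epsilon>_square[OF \<mu>] by simp
qed

lemma eventually_\<epsilon>_le:
  assumes "c > 0"
  shows "\<forall>\<^sub>F n in sequentially. \<mu> n > 0 \<and> \<epsilon> n \<le> c"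
proof -
  have "\<forall>\<^sub>F n in sequentially. max 1 (1 / c\<^sup>2) \<le> \<mu> n"
    by (rule spec[OF \<mu>_at_top[unfolded filterlim_at_top]])
  then show ?thesis
  proof eventually_elim
    case (elim n)
    then have \<mu>: "\<mu> n > 0"
      by linarith
    have "(\<epsilon> n)\<^sup>2 = 1 / \<mu> n"
      using \<mu>_mult_\<epsilon>_square[OF \<mu>] \<mu> by (simp add: field_simps)
    also have "\<dots> \<le> c\<^sup>2"
      using elim assms by (simp add: divide_le_eq mult.commute pos_divide_le_eq)
    finally have "\<epsilon> n \<le> c"
      by (rule power2_le_imp_le) (use assms in auto)
    with \<mu> show ?case ..
  qed
qed

lemma eventually_le_three_quarters:
  assumes K: "K \<subseteq> \<Omega>" and \<delta>: "\<delta> > 0"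
    and conv: "uniform_limit K (\<lambda>n x. pos_part (v n x - 1)) (\<lambda>x. 0) sequentially"
  shows "\<forall>\<^sub>F n in sequentially. \<forall>x. cball x \<delta> \<subseteq> K \<longrightarrow> v n x \<le> 3/4"
proof -
  define Psi where "Psi = integral (cball (0::'a) 1) bump"
  define M where "M = integral (cball (0::'a) 1) bump_potential"
  have Psi: "Psi > 0"
    unfolding Psi_def by (rule integral_bump_pos)
  have M: "M \<ge> 0"
    unfolding M_def
    by (intro integral_nonneg integrable_continuous_compact continuous_on_bump_potential
        bump_potential_nonneg compact_cball)
  have "DIM('a) \<ge> 1"
    by (simp add: DIM_positive Suc_le_eq)
  then obtain L \<eta> where L: "L \<ge> 1" and \<eta>: "0 < \<eta>" "\<eta> \<le> 1"
    and small: "(1/4) powr (1 - t) * C / L ^ DIM('a) + \<eta> * L\<^sup>2 / 2 * M \<le> Psi / 2"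
    by (rule choose_scale_and_threshold[OF Psi M C_pos, where t=t]) auto
  have "\<forall>\<^sub>F n in sequentially. \<mu> n > 0 \<and> \<epsilon> n \<le> \<delta> / L"
    using L \<delta> by (intro eventually_\<epsilon>_le) auto
  moreover have "\<forall>\<^sub>F n in sequentially. \<forall>y\<in>K. pos_part (v n y - 1) < \<eta>"
    using uniform_limitD[OF conv \<eta>(1)] by (simp add: abs_of_nonneg pos_part_nonneg)
  ultimately show ?thesis
  proof eventually_elim
    case (elim n)
    then have \<mu>: "\<mu> n > 0" and "L * \<epsilon> n \<le> \<delta>"
      using L by (auto simp: field_simps)
    show ?case
    proof (intro allI impI)
      fix x assume "cball x \<delta> \<subseteq> K"
      then have ball: "cball x (L * \<epsilon> n) \<subseteq> K"
        using \<open>L * \<epsilon> n \<le> \<delta>\<close> by (meson subset_cball order_trans)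
      have "v n x \<le> 1/4 + ((1/4) powr (1 - t) * C / L ^ DIM('a) + \<eta> * L\<^sup>2 / 2 * M) / Psi"
        unfolding Psi_def M_def
        by (rule rescaled_bound[OF \<mu> _ order_trans[OF ball K]])
          (use L \<eta> elim(2) ball in \<open>force intro: less_imp_le\<close>)+
      also have "\<dots> \<le> 1/4 + (Psi / 2) / Psi"
        using small Psi by (intro add_left_mono divide_right_mono) auto
      finally show "v n x \<le> 3/4"
        using Psi by simp
    qed
  qed
qed

lemma le_where_inactive:
  assumes \<mu>: "\<mu> n > 0" and \<delta>: "\<delta> > 0" and ball: "cball x \<delta> \<subseteq> \<Omega>"
    and inactive: "\<And>y. y \<in> cball x \<delta> \<Longrightarrow> pos_part (v n y - 1) = 0"
  shows "v n x \<le> (1 + C / (\<delta> ^ DIM('a) * integral (cball (0::'a) 1) bump)) * \<epsilon> n powr (DIM('a) / t)"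
proof -
  define Psi where "Psi = integral (cball (0::'a) 1) bump"
  define E where "E = \<epsilon> n powr (DIM('a) / t)"
  define L where "L = \<delta> / \<epsilon> n"
  have \<epsilon>: "\<epsilon> n > 0"
    using \<epsilon>_pos[OF \<mu>] .
  have E: "E > 0"
    using \<epsilon> by (simp add: E_def)
  have L: "L > 0" "L * \<epsilon> n = \<delta>"
    using \<epsilon> \<delta> by (auto simp: L_def)
  have "v n x \<le> E + (E powr (1 - t) * C / L ^ DIM('a) + 0 * L\<^sup>2 / 2 * integral (cball (0::'a) 1) bump_potential) / Psi"
    unfolding Psi_def using ball inactive
    by (intro rescaled_bound[OF \<mu> L(1)] E) (auto simp: L(2))
  also have "E powr (1 - t) * C / L ^ DIM('a) = E * C / \<delta> ^ DIM('a)"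
  proof -
    have "E powr (1 - t) * \<epsilon> n ^ DIM('a) = \<epsilon> n powr (DIM('a) / t * (1 - t) + DIM('a))"
      using \<epsilon> by (simp add: E_def powr_powr powr_add powr_realpow)
    also have "DIM('a) / t * (1 - t) + DIM('a) = DIM('a) / t"
      using t_ge_1 by (simp add: field_simps)
    finally have "E powr (1 - t) * \<epsilon> n ^ DIM('a) = E"
      by (simp add: E_def)
    then show ?thesis
      using \<epsilon> by (simp add: L_def power_divide field_simps)
  qed
  finally show ?thesis
    by (simp add: E_def Psi_def algebra_simps)
qed

lemma eventually_inactive_and_bounded:
  assumes K0: "compact K0" "K0 \<subseteq> \<Omega>'" and \<Omega>': "open \<Omega>'" "\<Omega>' \<subseteq> \<Omega>"
    and conv: "\<And>K. compact K \<Longrightarrow> K \<subseteq> \<Omega>' \<Longrightarrow>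
      uniform_limit K (\<lambda>n x. pos_part (v n x - 1)) (\<lambda>x. 0) sequentially"
  obtains B n\<^sub>0 where "B > 0"
    "\<And>n x. n \<ge> n\<^sub>0 \<Longrightarrow> x \<in> K0 \<Longrightarrow> pos_part (v n x - 1) = 0 \<and> v n x \<le> B * \<epsilon> n powr (DIM('a) / t)"
proof -
  obtain K e where K: "compact K" "K \<subseteq> \<Omega>'" and e: "e > 0" and ball_K: "\<And>x. x \<in> K0 \<Longrightarrow> cball x e \<subseteq> K"
    by (rule compact_cball_thickening[OF K0(1) \<Omega>'(1) K0(2)]) auto
  define \<delta> where "\<delta> = e / 2"
  have \<delta>: "\<delta> > 0"
    using e by (simp add: \<delta>_def)
  have "\<forall>\<^sub>F n in sequentially. \<forall>x. cball x \<delta> \<subseteq> K \<longrightarrow> v n x \<le> 3/4"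
    using K \<Omega>'(2) by (intro eventually_le_three_quarters \<delta> conv) auto
  moreover have "\<forall>\<^sub>F n in sequentially. \<mu> n > 0"
    by (rule spec[OF \<mu>_at_top[unfolded filterlim_at_top_dense]])
  ultimately have "\<forall>\<^sub>F n in sequentially. \<mu> n > 0 \<and> (\<forall>x. cball x \<delta> \<subseteq> K \<longrightarrow> v n x \<le> 3/4)"
    by (rule eventually_conj[rotated])
  then obtain n\<^sub>0 where n\<^sub>0: "\<And>n. n \<ge> n\<^sub>0 \<Longrightarrow> \<mu> n > 0 \<and> (\<forall>x. cball x \<delta> \<subseteq> K \<longrightarrow> v n x \<le> 3/4)"
    unfolding eventually_sequentially by blast
  define B where "B = 1 + C / (\<delta> ^ DIM('a) * integral (cball (0::'a) 1) bump)"
  have "B > 0"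
    using C_pos \<delta> integral_bump_pos[where 'a='a] by (simp add: B_def add_pos_pos)
  then show ?thesis
  proof (rule that)
    fix n x assume n: "n \<ge> n\<^sub>0" and x: "x \<in> K0"
    have ball_\<delta>: "cball y \<delta> \<subseteq> K" if "y \<in> cball x \<delta>" for y
    proof -
      have "cball y \<delta> \<subseteq> cball x e"
        using that by (simp add: cball_subset_cball_iff \<delta>_def dist_commute)
      then show ?thesis
        using ball_K[OF x] by blast
    qed
    have inactive: "pos_part (v n y - 1) = 0" if "y \<in> cball x \<delta>" for y
    proof -
      have "v n y \<le> 3/4"
        using n\<^sub>0[OF n] ball_\<delta>[OF that] by blast
      then show ?thesis
        by (simp add: pos_part_def)
    qed
    have "cball x \<delta> \<subseteq> \<Omega>"
      using ball_\<delta>[of x] \<delta> K(2) \<Omega>'(2) by (auto intro: subset_cball)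
    from le_where_inactive[OF _ \<delta> this inactive] n\<^sub>0[OF n] inactive[of x] \<delta>
    show "pos_part (v n x - 1) = 0 \<and> v n x \<le> B * \<epsilon> n powr (DIM('a) / t)"
      by (simp add: B_def)
  qed
qed

end

theorem lemma6p9:
  fixes \<Omega> \<Omega>' :: "'a::euclidean_space set"
    and v :: "nat \<Rightarrow> 'a \<Rightarrow> real"
    and \<mu> :: "nat \<Rightarrow> real"
    and p t C\<^sub>0 C\<^sub>t :: real
  assumes dim: "DIM('a) \<ge> 3"
    and p: "1 < p" "p < real DIM('a) / (real DIM('a) - 2)"
    and \<Omega>: "open \<Omega>" "bounded \<Omega>" "connected \<Omega>"
    and \<mu>: "filterlim \<mu> at_top sequentially"
    and v_nonneg: "\<And>n x. x \<in> \<Omega> \<Longrightarrow> v n x \<ge> 0"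
    and v_eq: "\<And>n. solves_neg_laplace (v n) (\<lambda>x. \<mu> n * pos_part (v n x - 1) powr p) \<Omega>"
    and t: "t \<ge> 1" and C: "C\<^sub>0 > 0" "C\<^sub>t > 0"
    and bound0: "\<And>n. ennreal (\<mu> n powr (real DIM('a) / 2)) *
                   (\<integral>\<^sup>+x\<in>\<Omega>. ennreal (pos_part (v n x - 1) powr p) \<partial>lebesgue) \<le> ennreal C\<^sub>0"
    and boundt: "\<And>n. ennreal (\<mu> n powr (real DIM('a) / 2)) *
                   (\<integral>\<^sup>+x\<in>\<Omega>. ennreal (v n x powr t) \<partial>lebesgue) \<le> ennreal C\<^sub>t"
    and \<Omega>': "open \<Omega>'" "connected \<Omega>'" "\<Omega>' \<subseteq> \<Omega>"
    and locunif: "\<And>K. compact K \<Longrightarrow> K \<subseteq> \<Omega>' \<Longrightarrow>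
                   uniform_limit K (\<lambda>n x. pos_part (v n x - 1)) (\<lambda>x. 0) sequentially"
  shows "\<forall>\<Omega>\<^sub>0. open \<Omega>\<^sub>0 \<and> compact (closure \<Omega>\<^sub>0) \<and> closure \<Omega>\<^sub>0 \<subseteq> \<Omega>' \<longrightarrow>
           (\<exists>n\<^sub>0::nat. \<exists>C>0. \<forall>n>n\<^sub>0.
              (\<forall>x\<in>\<Omega>\<^sub>0. pos_part (v n x - 1) = 0) \<and>
              (\<forall>x\<in>\<Omega>\<^sub>0. \<bar>v n x\<bar> \<le> C * (\<mu> n powr (-1/2)) powr (real DIM('a) / t)))"
proof (intro allI impI)
  fix \<Omega>\<^sub>0 :: "'a set"
  assume \<Omega>\<^sub>0: "open \<Omega>\<^sub>0 \<and> compact (closure \<Omega>\<^sub>0) \<and> closure \<Omega>\<^sub>0 \<subseteq> \<Omega>'"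
  interpret scaled_solution_sequence \<Omega> v \<mu> p t C\<^sub>t
    using \<Omega>(1) v_nonneg v_eq \<mu> p(1) t C(2) boundt by unfold_locales auto
  have "compact (closure \<Omega>\<^sub>0)" "closure \<Omega>\<^sub>0 \<subseteq> \<Omega>'"
    using \<Omega>\<^sub>0 by auto
  then obtain n\<^sub>0 B where B: "B > 0" and bound: "\<And>n x. n \<ge> n\<^sub>0 \<Longrightarrow> x \<in> closure \<Omega>\<^sub>0 \<Longrightarrow>
      pos_part (v n x - 1) = 0 \<and> v n x \<le> B * \<epsilon> n powr (DIM('a) / t)"
    by (rule eventually_inactive_and_bounded[OF _ _ \<Omega>'(1,3) locunif]) auto
  show "\<exists>n\<^sub>0::nat. \<exists>C>0. \<forall>n>n\<^sub>0. (\<forall>x\<in>\<Omega>\<^sub>0. pos_part (v n x - 1) = 0) \<and>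
      (\<forall>x\<in>\<Omega>\<^sub>0. \<bar>v n x\<bar> \<le> C * (\<mu> n powr (-1/2)) powr (real DIM('a) / t))"
  proof (intro exI[of _ n\<^sub>0] exI[of _ B] conjI allI impI ballI B)
    fix n x assume "n > n\<^sub>0" "x \<in> \<Omega>\<^sub>0"
    then have "n \<ge> n\<^sub>0" "x \<in> closure \<Omega>\<^sub>0" "x \<in> \<Omega>"
      using closure_subset \<Omega>\<^sub>0 \<Omega>'(3) by auto
    then show "pos_part (v n x - 1) = 0" "\<bar>v n x\<bar> \<le> B * (\<mu> n powr (-1/2)) powr (real DIM('a) / t)"
      using bound v_nonneg by (auto simp: \<epsilon>_def)
  qed
qed

end
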